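(* Let $\Omega\subset\mathbb{R}^n$ be a bounded open set with $C^2$ boundary, and let $\rho_0>0$ be such that the oriented boundary distance $b_\Omega$ is of class $C^2$ with bounded first and second derivatives on $\partial\Omega+B_{\rho_0}=\{y\in B(x,\rho_0): x\in\partial\Omega\}$. Let $\gamma\in AC(0,T;\mathbb{R}^n)$ and suppose that $d_\Omega(\gamma(t))<\rho_0$ for all $t\in[0,T]$. Then $d_\Omega\circ\gamma\in AC(0,T)$ and $$\frac{d}{dt}(d_\Omega\circ\gamma)(t)=\langle Db_\Omega(\gamma(t)),\dot\gamma(t)\rangle\,\mathbf{1}_{\Omega^c}(\gamma(t))\quad\text{for a.e. } t\in[0,T].$$ Moreover, the set $$N_\gamma:=\{t\in[0,T]:\ \gamma(t)\in\partial\Omega,\ \dot\gamma(t)\text{ exists},\ \langle Db_\Omega(\gamma(t)),\dot\gamma(t)\rangle\neq 0\}$$ is a discrete set.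
   Context: $AC(0,T;\mathbb{R}^n)$ is the space of absolutely continuous functions $[0,T]\to\mathbb{R}^n$. $d_\Omega(x)=\inf_{y\in\overline\Omega}|x-y|$ is the distance from $\overline\Omega$, $d_{\Omega^c}$ the distance from $\mathbb{R}^n\setminus\Omega$, and $b_\Omega=d_\Omega-d_{\Omega^c}$ is the oriented boundary distance. $\mathbf{1}_{\Omega^c}$ is the characteristic function of $\Omega^c=\mathbb{R}^n\setminus\Omega$. *)

theory Defs
  imports "HOL-Analysis.Analysis"
begin

text \<open>Distance from the closure of a set (infdist to a set equals infdist to its closure),
  and the oriented boundary distance.\<close>
definition dist_set :: "'a::euclidean_space set \<Rightarrow> 'a \<Rightarrow> real" where
  "dist_set \<Omega> x = infdist x \<Omega>"

definition oriented_dist :: "'a::euclidean_space set \<Rightarrow> 'a \<Rightarrow> real" where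
  "oriented_dist \<Omega> x = infdist x \<Omega> - infdist x (- \<Omega>)"

definition absolutely_continuous_on :: "real set \<Rightarrow> (real \<Rightarrow> 'a::real_normed_vector) \<Rightarrow> bool" where
  "absolutely_continuous_on S f \<longleftrightarrow>
     (\<forall>e>0. \<exists>d>0. \<forall>(n::nat) (a::nat \<Rightarrow> real) (b::nat \<Rightarrow> real).
        (\<forall>i<n. a i \<le> b i \<and> {a i..b i} \<subseteq> S) \<and>
        (\<forall>i<n. \<forall>j<n. i \<noteq> j \<longrightarrow> b i \<le> a j \<or> b j \<le> a i) \<and>
        (\<Sum>i<n. b i - a i) < d
        \<longrightarrow> (\<Sum>i<n. norm (f (b i) - f (a i))) < e)"

definition C2_on_with :: "'a::euclidean_space set \<Rightarrow> ('a \<Rightarrow> real) \<Rightarrow> ('a \<Rightarrow> 'a) \<Rightarrow> ('a \<Rightarrow> 'a \<Rightarrow>\<^sub>L 'a) \<Rightarrow> bool" where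
  "C2_on_with S f Df D2f \<longleftrightarrow>
     (\<forall>x\<in>S. (f has_derivative (\<lambda>h. Df x \<bullet> h)) (at x)) \<and>
     (\<forall>x\<in>S. (Df has_derivative blinfun_apply (D2f x)) (at x)) \<and>
     continuous_on S D2f"

definition C2_boundary :: "'a::euclidean_space set \<Rightarrow> bool" where
  "C2_boundary \<Omega> \<longleftrightarrow>
     (\<forall>x\<in>frontier \<Omega>. \<exists>r>0. \<exists>\<phi> D\<phi> D2\<phi>.
        C2_on_with (ball x r) \<phi> D\<phi> D2\<phi> \<and>
        (\<forall>y\<in>ball x r. D\<phi> y \<noteq> 0) \<and>
        \<Omega> \<inter> ball x r = {y \<in> ball x r. \<phi> y < 0})"

end

theory Submission
  imports Defs
begin

text \<open>Since \<open>d\<^sub>\<Omega> = max b\<^sub>\<Omega> 0\<close> and \<open>d\<^sub>\<Omega>\<close> is 1-Lipschitz, \<open>d\<^sub>\<Omega> \<circ> \<gamma>\<close> is absolutely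
  continuous. An absolutely continuous curve is differentiable almost everywhere: its coordinates
  are differences of two increasing continuous functions (variation plus or minus the function),
  and increasing functions are differentiable almost everywhere by Lebesgue's theorem, a
  consequence of the Vitali covering theorem. Where \<open>\<gamma>\<close> is differentiable, \<open>d\<^sub>\<Omega> \<circ> \<gamma>\<close> vanishes
  near \<open>t\<close> if \<open>\<gamma> t \<in> \<Omega>\<close>, equals \<open>b\<^sub>\<Omega> \<circ> \<gamma>\<close> near \<open>t\<close> if \<open>\<gamma> t\<close> lies outside
  \<open>closure \<Omega>\<close>, and on \<open>\<partial>\<Omega>\<close> it is the positive part of a function vanishing at \<open>t\<close>, which has
  derivative zero when \<open>\<langle>Db\<^sub>\<Omega>(\<gamma> t), \<gamma>'(t)\<rangle> = 0\<close>. The remaining times are the zeros of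
  \<open>b\<^sub>\<Omega> \<circ> \<gamma>\<close> with nonzero derivative; such zeros are isolated, so they form a discrete,
  hence countable and negligible, set.\<close>

section \<open>Lebesgue's differentiation theorem for monotone functions\<close>

lemma countable_imp_negligible: "countable (A::'a::euclidean_space set) \<Longrightarrow> negligible A"
  by (simp add: negligible_iff_null_sets null_sets_completionI countable_imp_null_set_lborel)

lemma negligible_Un_lmeasurable:
  assumes "G \<in> lmeasurable" "negligible N"
  shows "G \<union> N \<in> lmeasurable" "measure lebesgue (G \<union> N) = measure lebesgue G"
proof -
  show "G \<union> N \<in> lmeasurable"
    using assms by (auto simp: negligible_iff_measure intro: fmeasurable.Un)
  show "measure lebesgue (G \<union> N) = measure lebesgue G"
    using assms by (simp add: measure_Un_null_set negligible_iff_null_sets fmeasurableD)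
qed

lemma negligible_if_negligible_Int_balls:
  fixes E :: "real set"
  assumes "\<And>n::nat. negligible (E \<inter> ball 0 (real n))"
  shows "negligible E"
proof -
  have "E = (\<Union>n. E \<inter> ball 0 (real n))"
    by (auto simp: dist_real_def) (meson reals_Archimedean2)
  also have "negligible \<dots>"
    using assms by (intro negligible_countable_Union) auto
  finally show ?thesis .
qed

definition diff_quot :: "(real \<Rightarrow> real) \<Rightarrow> real \<Rightarrow> real \<Rightarrow> real" where
  "diff_quot F u v = (F v - F u) / (v - u)"

definition lower_derivate_lt :: "(real \<Rightarrow> real) \<Rightarrow> real \<Rightarrow> real \<Rightarrow> bool" where
  "lower_derivate_lt F x p \<longleftrightarrow>
     (\<forall>d>0. \<exists>u v. u \<le> x \<and> x \<le> v \<and> u < v \<and> v - u < d \<and> diff_quot F u v < p)"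

definition upper_derivate_gt :: "(real \<Rightarrow> real) \<Rightarrow> real \<Rightarrow> real \<Rightarrow> bool" where
  "upper_derivate_gt F x q \<longleftrightarrow>
     (\<forall>d>0. \<exists>u v. u \<le> x \<and> x \<le> v \<and> u < v \<and> v - u < d \<and> diff_quot F u v > q)"

lemma diff_quot_nonneg:
  assumes "mono F" "u < v"
  shows "diff_quot F u v \<ge> 0"
  using assms by (simp add: diff_quot_def monoD)

lemma Icc_subset_ball: "u \<le> x \<Longrightarrow> x \<le> v \<Longrightarrow> v - u < r \<Longrightarrow> {u..v} \<subseteq> ball (x::real) r"
  by (auto simp: dist_real_def)

lemma borel_UN_Icc: "countable C \<Longrightarrow> (\<Union>i\<in>C. {fst i..snd i::real}) \<in> sets borel"
  by (rule sets.countable_UN'') auto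

lemma Vitali_covering_intervals:
  fixes S :: "real set"
  assumes "open G" "S \<subseteq> G"
    and cov: "\<And>x d. x \<in> S \<Longrightarrow> d > 0 \<Longrightarrow>
      \<exists>u v. u \<le> x \<and> x \<le> v \<and> u < v \<and> v - u < d \<and> P u v"
  obtains C where "countable C"
    "\<And>i. i \<in> C \<Longrightarrow> fst i < snd i \<and> {fst i..snd i} \<subseteq> G \<and> P (fst i) (snd i)"
    "disjoint_family_on (\<lambda>i. {fst i..snd i}) C"
    "negligible (S - (\<Union>i\<in>C. {fst i<..<snd i}))"
proof -
  let ?K = "{i. fst i < snd i \<and> {fst i..snd i} \<subseteq> G \<and> P (fst i) (snd i)}"
  let ?a = "\<lambda>i::real\<times>real. (fst i + snd i) / 2"
  let ?r = "\<lambda>i::real\<times>real. (snd i - fst i) / 2"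
  have cb: "cball (?a i) (?r i) = {fst i..snd i}" for i
    by (simp add: cball_eq_atLeastAtMost field_simps)
  have S: "\<exists>i. i \<in> ?K \<and> x \<in> cball (?a i) (?r i) \<and> ?r i < d" if xd: "x \<in> S" "0 < d" for x d
  proof -
    obtain \<rho> where "\<rho> > 0" "ball x \<rho> \<subseteq> G"
      using assms(1,2) xd(1) open_contains_ball by blast
    moreover obtain u v where "u \<le> x" "x \<le> v" "u < v" "v - u < min d \<rho>" "P u v"
      using cov[OF xd(1)] xd(2) \<open>\<rho> > 0\<close> by (metis min_less_iff_conj)
    ultimately show ?thesis
      using cb[of "(u,v)"] Icc_subset_ball[of u x v \<rho>] by (intro exI[of _ "(u,v)"]) auto
  qed
  obtain C where C: "countable C" "C \<subseteq> ?K"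
     "pairwise (\<lambda>i j. disjnt (cball (?a i) (?r i)) (cball (?a j) (?r j))) C"
     "negligible (S - (\<Union>i \<in> C. cball (?a i) (?r i)))"
    by (rule Vitali_covering_theorem_cballs[of ?K ?r S ?a, OF _ S]) auto
  show thesis
  proof (rule that[OF C(1)])
    show "\<And>i. i \<in> C \<Longrightarrow> fst i < snd i \<and> {fst i..snd i} \<subseteq> G \<and> P (fst i) (snd i)"
      using C(2) by auto
    show "disjoint_family_on (\<lambda>i. {fst i..snd i}) C"
      using C(3) unfolding cb by (auto simp: pairwise_def disjoint_family_on_def disjnt_def)
    have "negligible (fst ` C \<union> snd ` C)" using C(1) by (intro countable_imp_negligible) auto
    then have "negligible ((S - (\<Union>i \<in> C. {fst i..snd i})) \<union> (fst ` C \<union> snd ` C))"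
      using C(4) unfolding cb by (rule negligible_Un[rotated])
    then show "negligible (S - (\<Union>i\<in>C. {fst i<..<snd i}))"
      by (rule negligible_subset) force
  qed
qed

lemma emeasure_disjoint_UN_Icc:
  fixes F :: "real \<Rightarrow> real"
  assumes "mono F" "continuous_on UNIV F"
    and "countable C" "disjoint_family_on (\<lambda>i. {fst i..snd i}) C" "\<And>i. i \<in> C \<Longrightarrow> fst i \<le> snd i"
  shows "emeasure (interval_measure F) (\<Union>i\<in>C. {fst i..snd i})
           = (\<integral>\<^sup>+i. ennreal (F (snd i) - F (fst i)) \<partial>count_space C)"
proof -
  have "emeasure (interval_measure F) (\<Union>i\<in>C. {fst i..snd i})
      = (\<integral>\<^sup>+i. emeasure (interval_measure F) {fst i..snd i} \<partial>count_space C)"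
    by (rule emeasure_UN_countable) (use assms in auto)
  also have "\<dots> = (\<integral>\<^sup>+i. ennreal (F (snd i) - F (fst i)) \<partial>count_space C)"
    by (rule nn_integral_cong)
      (use assms in \<open>auto intro!: emeasure_interval_measure_Icc monoD[of F]\<close>)
  finally show ?thesis .
qed

lemma emeasure_lebesgue_disjoint_UN_Icc:
  assumes "countable C" "disjoint_family_on (\<lambda>i. {fst i..snd i}) C" "\<And>i. i \<in> C \<Longrightarrow> fst i \<le> snd i"
  shows "emeasure lebesgue (\<Union>i\<in>C. {fst i..snd i::real})
           = (\<integral>\<^sup>+i. ennreal (snd i - fst i) \<partial>count_space C)"
proof -
  have "emeasure lebesgue (\<Union>i\<in>C. {fst i..snd i})
      = (\<integral>\<^sup>+i. emeasure lebesgue {fst i..snd i} \<partial>count_space C)"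
    by (rule emeasure_UN_countable) (use assms in auto)
  also have "\<dots> = (\<integral>\<^sup>+i. ennreal (snd i - fst i) \<partial>count_space C)"
    by (rule nn_integral_cong) (use assms in auto)
  finally show ?thesis .
qed

lemma emeasure_interval_measure_UN_Icc_le:
  fixes F :: "real \<Rightarrow> real"
  assumes F: "mono F" "continuous_on UNIV F"
    and C: "countable C" "disjoint_family_on (\<lambda>i. {fst i..snd i}) C"
    and le: "\<And>i. i \<in> C \<Longrightarrow> fst i \<le> snd i \<and> F (snd i) - F (fst i) \<le> p * (snd i - fst i)"
    and "p \<ge> 0"
  shows "emeasure (interval_measure F) (\<Union>i\<in>C. {fst i..snd i})
          \<le> ennreal p * emeasure lebesgue (\<Union>i\<in>C. {fst i..snd i})"
proof -
  have "(\<integral>\<^sup>+i. ennreal (F (snd i) - F (fst i)) \<partial>count_space C)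
      \<le> (\<integral>\<^sup>+i. ennreal p * ennreal (snd i - fst i) \<partial>count_space C)"
    by (rule nn_integral_mono) (use le \<open>p \<ge> 0\<close> in \<open>auto simp: ennreal_mult[symmetric] intro!: ennreal_leI\<close>)
  then show ?thesis
    using le by (simp add: emeasure_disjoint_UN_Icc[OF F C] emeasure_lebesgue_disjoint_UN_Icc[OF C]
        nn_integral_cmult)
qed

lemma emeasure_interval_measure_UN_Icc_ge:
  fixes F :: "real \<Rightarrow> real"
  assumes F: "mono F" "continuous_on UNIV F"
    and C: "countable C" "disjoint_family_on (\<lambda>i. {fst i..snd i}) C"
    and ge: "\<And>i. i \<in> C \<Longrightarrow> fst i \<le> snd i \<and> q * (snd i - fst i) \<le> F (snd i) - F (fst i)"
    and "q \<ge> 0"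
  shows "ennreal q * emeasure lebesgue (\<Union>i\<in>C. {fst i..snd i})
          \<le> emeasure (interval_measure F) (\<Union>i\<in>C. {fst i..snd i})"
proof -
  have "(\<integral>\<^sup>+i. ennreal q * ennreal (snd i - fst i) \<partial>count_space C)
      \<le> (\<integral>\<^sup>+i. ennreal (F (snd i) - F (fst i)) \<partial>count_space C)"
    by (rule nn_integral_mono) (use ge \<open>q \<ge> 0\<close> in \<open>auto simp: ennreal_mult[symmetric] intro!: ennreal_leI\<close>)
  then show ?thesis
    using ge by (simp add: emeasure_disjoint_UN_Icc[OF F C] emeasure_lebesgue_disjoint_UN_Icc[OF C]
        nn_integral_cmult)
qed

lemma emeasure_nested_interval_families:
  fixes F :: "real \<Rightarrow> real"
  assumes F: "mono F" "continuous_on UNIV F"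
    and C: "countable C" "disjoint_family_on (\<lambda>i. {fst i..snd i}) C"
    and D: "countable D" "disjoint_family_on (\<lambda>i. {fst i..snd i}) D"
    and slow: "\<And>i. i \<in> C \<Longrightarrow> fst i \<le> snd i \<and> F (snd i) - F (fst i) \<le> p * (snd i - fst i)"
    and fast: "\<And>i. i \<in> D \<Longrightarrow> fst i \<le> snd i \<and> q * (snd i - fst i) \<le> F (snd i) - F (fst i)"
    and nested: "(\<Union>i\<in>D. {fst i..snd i}) \<subseteq> (\<Union>i\<in>C. {fst i..snd i})"
    and "p \<ge> 0" "q \<ge> 0"
  shows "ennreal q * emeasure lebesgue (\<Union>i\<in>D. {fst i..snd i})
           \<le> ennreal p * emeasure lebesgue (\<Union>i\<in>C. {fst i..snd i})"
proof -
  have "ennreal q * emeasure lebesgue (\<Union>i\<in>D. {fst i..snd i})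
      \<le> emeasure (interval_measure F) (\<Union>i\<in>D. {fst i..snd i})"
    by (rule emeasure_interval_measure_UN_Icc_ge[OF F D fast \<open>q \<ge> 0\<close>])
  also have "\<dots> \<le> emeasure (interval_measure F) (\<Union>i\<in>C. {fst i..snd i})"
    by (rule emeasure_mono[OF nested]) (use C(1) borel_UN_Icc in simp)
  also have "\<dots> \<le> ennreal p * emeasure lebesgue (\<Union>i\<in>C. {fst i..snd i})"
    by (rule emeasure_interval_measure_UN_Icc_le[OF F C slow \<open>p \<ge> 0\<close>])
  finally show ?thesis .
qed

lemma negligible_by_contraction:
  fixes E :: "real set"
  assumes step: "\<And>G N. open G \<Longrightarrow> bounded G \<Longrightarrow> negligible N \<Longrightarrow> E \<subseteq> G \<union> N \<Longrightarrow>
      \<exists>H N'. open H \<and> bounded H \<and> negligible N' \<and> E \<subseteq> H \<union> N' \<and>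
        measure lebesgue H \<le> r * measure lebesgue G"
    and r: "0 \<le> r" "r < 1" and "bounded E"
  shows "negligible E"
proof -
  obtain R where R: "E \<subseteq> ball 0 R" using \<open>bounded E\<close> bounded_subset_ballD by blast
  let ?m0 = "measure lebesgue (ball (0::real) R)"
  have iterate: "\<exists>G N. open G \<and> bounded G \<and> negligible N \<and> E \<subseteq> G \<union> N \<and>
      measure lebesgue G \<le> r^k * ?m0" for k
  proof (induction k)
    case 0
    show ?case by (rule exI[of _ "ball 0 R"], rule exI[of _ "{}"]) (use R in auto)
  next
    case (Suc k)
    then obtain G N where GN: "open G" "bounded G" "negligible N" "E \<subseteq> G \<union> N"
      "measure lebesgue G \<le> r^k * ?m0"
      by blast
    obtain H N' where HN: "open H" "bounded H" "negligible N'" "E \<subseteq> H \<union> N'"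
      "measure lebesgue H \<le> r * measure lebesgue G"
      using step[OF GN(1-4)] by blast
    have "measure lebesgue H \<le> r^(Suc k) * ?m0"
      using HN(5) mult_left_mono[OF GN(5) r(1)] by simp
    then show ?case using HN by blast
  qed
  show ?thesis
    unfolding negligible_outer
  proof (intro allI impI)
    fix e :: real assume "e > 0"
    then obtain k where k: "r^k < e / (?m0 + 1)"
      using real_arch_pow_inv r(2) by (metis add_nonneg_pos divide_pos_pos measure_nonneg zero_less_one)
    obtain G N where GN: "open G" "bounded G" "negligible N" "E \<subseteq> G \<union> N"
      "measure lebesgue G \<le> r^k * ?m0"
      using iterate by blast
    have G: "G \<in> lmeasurable" using GN lmeasurable_open by blast
    have "r^k * ?m0 \<le> r^k * (?m0 + 1)" using r(1) by (intro mult_left_mono) auto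
    also have "\<dots> < e" using k by (simp add: pos_less_divide_eq add_nonneg_pos)
    finally have "measure lebesgue (G \<union> N) < e"
      using GN(5) negligible_Un_lmeasurable(2)[OF G GN(3)] by linarith
    then show "\<exists>T. E \<subseteq> T \<and> T \<in> lmeasurable \<and> measure lebesgue T < e"
      using GN(4) negligible_Un_lmeasurable(1)[OF G GN(3)] by blast
  qed
qed

lemma lower_derivate_ltD:
  assumes "lower_derivate_lt F x p" "d > 0"
  shows "\<exists>u v. u \<le> x \<and> x \<le> v \<and> u < v \<and> v - u < d \<and> F v - F u \<le> p * (v - u)"
  using assms unfolding lower_derivate_lt_def diff_quot_def
  by (metis diff_gt_0_iff_gt less_imp_le pos_divide_less_eq)

lemma upper_derivate_gtD:
  assumes "upper_derivate_gt F x q" "d > 0"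
  shows "\<exists>u v. u \<le> x \<and> x \<le> v \<and> u < v \<and> v - u < d \<and> q * (v - u) \<le> F v - F u"
  using assms unfolding upper_derivate_gt_def diff_quot_def
  by (metis diff_gt_0_iff_gt less_imp_le pos_less_divide_eq)

text \<open>Cover \<open>E\<close>, up to a null set, by intervals on which \<open>F\<close> grows at rate at most \<open>p\<close>, and
  their interiors by intervals on which it grows at rate at least \<open>q\<close>; comparing the increments
  of \<open>F\<close> shows that the second cover is smaller than the first by the factor \<open>p / q\<close>.\<close>

lemma lower_upper_derivate_contraction:
  fixes F :: "real \<Rightarrow> real"
  assumes F: "mono F" "continuous_on UNIV F"
    and pq: "0 \<le> p" "p < q"
    and E: "\<And>x. x \<in> E \<Longrightarrow> lower_derivate_lt F x p \<and> upper_derivate_gt F x q"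
    and G: "open G" "bounded G" and N: "negligible N" "E \<subseteq> G \<union> N"
  shows "\<exists>H N'. open H \<and> bounded H \<and> negligible N' \<and> E \<subseteq> H \<union> N' \<and>
           measure lebesgue H \<le> (p / q) * measure lebesgue G"
proof -
  define S1 where "S1 = E - N"
  have S1G: "S1 \<subseteq> G" using N(2) unfolding S1_def by blast
  have cov1: "\<exists>u v. u \<le> x \<and> x \<le> v \<and> u < v \<and> v - u < d \<and> F v - F u \<le> p * (v - u)"
    if "x \<in> S1" "d > 0" for x d
    using E that lower_derivate_ltD unfolding S1_def by blast
  obtain C1 where C1: "countable C1"
    "\<And>i. i \<in> C1 \<Longrightarrow> fst i < snd i \<and> {fst i..snd i} \<subseteq> G \<and> F (snd i) - F (fst i) \<le> p * (snd i - fst i)"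
    "disjoint_family_on (\<lambda>i. {fst i..snd i}) C1" "negligible (S1 - (\<Union>i\<in>C1. {fst i<..<snd i}))"
    by (rule Vitali_covering_intervals[OF G(1) S1G cov1]) blast+
  define O1 where "O1 = (\<Union>i\<in>C1. {fst i<..<snd i})"
  define A where "A = (\<Union>i\<in>C1. {fst i..snd i})"
  define S2 where "S2 = S1 \<inter> O1"
  have O1: "open O1" "S2 \<subseteq> O1" unfolding O1_def S2_def by auto
  have cov2: "\<exists>u v. u \<le> x \<and> x \<le> v \<and> u < v \<and> v - u < d \<and> q * (v - u) \<le> F v - F u"
    if "x \<in> S2" "d > 0" for x d
    using E that upper_derivate_gtD unfolding S1_def S2_def by blast
  obtain C2 where C2: "countable C2"
    "\<And>i. i \<in> C2 \<Longrightarrow> fst i < snd i \<and> {fst i..snd i} \<subseteq> O1 \<and> q * (snd i - fst i) \<le> F (snd i) - F (fst i)"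
    "disjoint_family_on (\<lambda>i. {fst i..snd i}) C2" "negligible (S2 - (\<Union>i\<in>C2. {fst i<..<snd i}))"
    by (rule Vitali_covering_intervals[OF O1 cov2]) blast+
  define H where "H = (\<Union>i\<in>C2. {fst i<..<snd i})"
  define B where "B = (\<Union>i\<in>C2. {fst i..snd i})"
  have HB: "H \<subseteq> B" unfolding H_def B_def by (intro UN_mono) auto
  have "B \<subseteq> O1" using C2(2) unfolding B_def by blast
  moreover have "O1 \<subseteq> A" unfolding O1_def A_def by (intro UN_mono) auto
  ultimately have BA: "B \<subseteq> A" by (rule order_trans)
  have AG: "A \<subseteq> G" using C1(2) unfolding A_def by blast
  have H: "open H" "bounded H"
    using bounded_subset[OF G(2)] HB BA AG unfolding H_def by auto
  have N': "negligible (N \<union> (S1 - O1) \<union> (S2 - H))"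
    by (intro negligible_Un N(1) C1(4)[folded O1_def] C2(4)[folded H_def])
  have EH: "E \<subseteq> H \<union> (N \<union> (S1 - O1) \<union> (S2 - H))" unfolding S1_def S2_def by auto
  have "B \<in> sets borel" unfolding B_def using C2(1) by (rule borel_UN_Icc)
  then have "ennreal q * emeasure lebesgue H \<le> ennreal q * emeasure lebesgue B"
    by (intro mult_left_mono[OF emeasure_mono[OF HB]]) auto
  also have "\<dots> \<le> ennreal p * emeasure lebesgue A"
    unfolding A_def B_def
    by (rule emeasure_nested_interval_families[OF F C1(1,3) C2(1,3) _ _ BA[unfolded A_def B_def]])
      (use C1(2) C2(2) pq in \<open>auto simp: less_imp_le\<close>)
  also have "\<dots> \<le> ennreal p * emeasure lebesgue G"
    by (rule mult_left_mono[OF emeasure_mono[OF AG]]) (use G in auto)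
  finally have "ennreal (q * measure lebesgue H) \<le> ennreal (p * measure lebesgue G)"
    using G H pq by (simp add: emeasure_eq_measure2 ennreal_mult lmeasurable_open)
  then have "q * measure lebesgue H \<le> p * measure lebesgue G"
    using pq by (subst (asm) ennreal_le_iff) auto
  then have "measure lebesgue H \<le> (p / q) * measure lebesgue G"
    using pq by (simp add: field_simps)
  then show ?thesis using H N' EH by blast
qed

lemma negligible_lower_upper_derivate:
  fixes F :: "real \<Rightarrow> real"
  assumes F: "mono F" "continuous_on UNIV F" and "p < q"
  shows "negligible {x. lower_derivate_lt F x p \<and> upper_derivate_gt F x q}"
proof (cases "p < 0")
  case True
  have "\<not> lower_derivate_lt F x p" for x
    using diff_quot_nonneg[OF F(1)] True unfolding lower_derivate_lt_def
    by (meson not_less order.strict_trans zero_less_one)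
  then show ?thesis by simp
next
  case False
  show ?thesis
  proof (rule negligible_if_negligible_Int_balls, rule negligible_by_contraction)
    fix n :: nat and G N
    assume "open G" "bounded G" "negligible N"
      "{x. lower_derivate_lt F x p \<and> upper_derivate_gt F x q} \<inter> ball 0 (real n) \<subseteq> G \<union> N"
    then show "\<exists>H N'. open H \<and> bounded H \<and> negligible N' \<and>
        {x. lower_derivate_lt F x p \<and> upper_derivate_gt F x q} \<inter> ball 0 (real n) \<subseteq> H \<union> N' \<and>
        measure lebesgue H \<le> (p / q) * measure lebesgue G"
      using False \<open>p < q\<close> by (intro lower_upper_derivate_contraction[OF F]) auto
  qed (use False \<open>p < q\<close> in auto)
qed

lemma negligible_upper_derivate_infinite:
  fixes F :: "real \<Rightarrow> real"
  assumes F: "mono F" "continuous_on UNIV F"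
  shows "negligible {x. \<forall>M. upper_derivate_gt F x M}"
proof (rule negligible_if_negligible_Int_balls)
  fix n :: nat
  define S where "S = {x. \<forall>M. upper_derivate_gt F x M} \<inter> ball 0 (real n)"
  define R where "R = real n + 1"
  define K where "K = F R - F (-R)"
  have K: "K \<ge> 0" unfolding K_def R_def using monoD[OF F(1)] by simp
  show "negligible S"
    unfolding negligible_outer_le
  proof (intro allI impI)
    fix e :: real assume "e > 0"
    define M where "M = (K + 1) / e"
    have M: "M > 0" unfolding M_def using K \<open>e > 0\<close> by simp
    have cov: "\<exists>u v. u \<le> x \<and> x \<le> v \<and> u < v \<and> v - u < d \<and> M * (v - u) \<le> F v - F u"
      if "x \<in> S" "d > 0" for x d
      using that upper_derivate_gtD unfolding S_def by blast
    have "S \<subseteq> ball 0 R" unfolding S_def R_def by auto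
    then obtain C where C: "countable C"
      "\<And>i. i \<in> C \<Longrightarrow> fst i < snd i \<and> {fst i..snd i} \<subseteq> ball 0 R \<and> M * (snd i - fst i) \<le> F (snd i) - F (fst i)"
      "disjoint_family_on (\<lambda>i. {fst i..snd i}) C" "negligible (S - (\<Union>i\<in>C. {fst i<..<snd i}))"
      by (rule Vitali_covering_intervals[OF open_ball _ cov]) blast+
    define B where "B = (\<Union>i\<in>C. {fst i..snd i})"
    have BR: "B \<subseteq> {-R..R}" unfolding B_def using C(2) by (fastforce simp: dist_real_def)
    have B: "B \<in> lmeasurable"
      using borel_UN_Icc[OF C(1), folded B_def] BR
      by (intro bounded_set_imp_lmeasurable) (auto intro: bounded_subset[of "{-R..R}"])
    have "ennreal M * emeasure lebesgue B \<le> emeasure (interval_measure F) B"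
      unfolding B_def by (rule emeasure_interval_measure_UN_Icc_ge[OF F C(1,3)])
        (use C(2) M in \<open>auto simp: less_imp_le\<close>)
    also have "\<dots> \<le> emeasure (interval_measure F) {-R..R}" by (rule emeasure_mono[OF BR]) simp
    also have "\<dots> = ennreal K" unfolding K_def
      by (rule emeasure_interval_measure_Icc) (auto simp: R_def intro: monoD[OF F(1)] F(2))
    finally have "ennreal (M * measure lebesgue B) \<le> ennreal K"
      using B M by (simp add: emeasure_eq_measure2 ennreal_mult)
    then have "M * measure lebesgue B \<le> K" using K by (subst (asm) ennreal_le_iff) auto
    then have "measure lebesgue B \<le> K / M" using M by (simp add: pos_le_divide_eq mult.commute)
    also have "\<dots> \<le> e" unfolding M_def using K \<open>e > 0\<close> by (simp add: field_simps)
    finally have "measure lebesgue B \<le> e" .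
    moreover have "(\<Union>i\<in>C. {fst i<..<snd i}) \<subseteq> B" unfolding B_def by (intro UN_mono) auto
    then have "S \<subseteq> B \<union> (S - (\<Union>i\<in>C. {fst i<..<snd i}))" by blast
    ultimately show "\<exists>T. S \<subseteq> T \<and> T \<in> lmeasurable \<and> measure lebesgue T \<le> e"
      using negligible_Un_lmeasurable[OF B C(4)] by metis
  qed
qed

lemma diff_quot_min_max: "(F y - F x) / (y - x) = diff_quot F (min x y) (max x y)"
proof (cases "x \<le> y")
  case False
  then have "diff_quot F (min x y) (max x y) = (F x - F y) / (x - y)" by (simp add: diff_quot_def)
  also have "\<dots> = (F y - F x) / (y - x)" by (metis minus_diff_eq minus_divide_divide)
  finally show ?thesis by simp
qed (simp add: diff_quot_def)

lemma upper_derivate_gt_neg: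
  assumes "mono F" "q < 0"
  shows "upper_derivate_gt F x q"
  unfolding upper_derivate_gt_def
proof (intro allI impI)
  fix d :: real assume "d > 0"
  then have "diff_quot F x (x + d/2) \<ge> 0" by (intro diff_quot_nonneg[OF \<open>mono F\<close>]) simp
  then show "\<exists>u v. u \<le> x \<and> x \<le> v \<and> u < v \<and> v - u < d \<and> q < diff_quot F u v"
    using \<open>d > 0\<close> \<open>q < 0\<close> by (intro exI[of _ x] exI[of _ "x + d/2"]) auto
qed

lemma has_real_derivative_of_derivates:
  fixes F :: "real \<Rightarrow> real"
  assumes "mono F"
    and bounded: "\<not> (\<forall>M. upper_derivate_gt F x M)"
    and no_gap: "\<And>p q. p \<in> \<rat> \<Longrightarrow> q \<in> \<rat> \<Longrightarrow> p < q \<Longrightarrow>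
      \<not> (lower_derivate_lt F x p \<and> upper_derivate_gt F x q)"
  shows "\<exists>L. (F has_real_derivative L) (at x)"
proof -
  define A where "A = {q. \<not> upper_derivate_gt F x q}"
  have "A \<noteq> {}" using bounded A_def by auto
  have "bdd_below A" unfolding A_def
    by (metis (mono_tags) bdd_belowI mem_Collect_eq not_le upper_derivate_gt_neg[OF \<open>mono F\<close>])
  define L where "L = Inf A"
  have "((\<lambda>y. (F y - F x) / (y - x)) \<longlongrightarrow> L) (at x)"
  proof (rule LIM_I)
    fix e :: real assume e: "e > 0"
    obtain q where "q \<in> A" "q < L + e"
      using cInf_less_iff[OF \<open>A \<noteq> {}\<close> \<open>bdd_below A\<close>, of "L + e"] e unfolding L_def by auto
    then have "\<not> upper_derivate_gt F x q" unfolding A_def by simp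
    then obtain d1 where d1: "d1 > 0"
      "\<And>u v. u \<le> x \<Longrightarrow> x \<le> v \<Longrightarrow> u < v \<Longrightarrow> v - u < d1 \<Longrightarrow> diff_quot F u v \<le> q"
      unfolding upper_derivate_gt_def by (meson not_le)
    obtain p where p: "p \<in> \<rat>" "L - e < p" "p < L - e/2"
      using Rats_dense_in_real[of "L - e" "L - e/2"] e by auto
    obtain q' where q': "q' \<in> \<rat>" "L - e/2 < q'" "q' < L"
      using Rats_dense_in_real[of "L - e/2" L] e by auto
    have "q' \<notin> A" using cInf_lower[OF _ \<open>bdd_below A\<close>, of q'] q'(3) unfolding L_def by linarith
    then have "upper_derivate_gt F x q'" unfolding A_def by simp
    moreover have "p < q'" using p q' by linarith
    ultimately have "\<not> lower_derivate_lt F x p" using no_gap[OF p(1) q'(1)] by blast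
    then obtain d2 where d2: "d2 > 0"
      "\<And>u v. u \<le> x \<Longrightarrow> x \<le> v \<Longrightarrow> u < v \<Longrightarrow> v - u < d2 \<Longrightarrow> p \<le> diff_quot F u v"
      unfolding lower_derivate_lt_def by (meson not_le)
    show "\<exists>s>0. \<forall>y. y \<noteq> x \<and> norm (y - x) < s \<longrightarrow> norm ((F y - F x) / (y - x) - L) < e"
    proof (intro exI[of _ "min d1 d2"] conjI allI impI)
      fix y assume y: "y \<noteq> x \<and> norm (y - x) < min d1 d2"
      have "p \<le> diff_quot F (min x y) (max x y)" "diff_quot F (min x y) (max x y) \<le> q"
        using d1(2)[of "min x y" "max x y"] d2(2)[of "min x y" "max x y"] y by auto
      then show "norm ((F y - F x) / (y - x) - L) < e"
        using p \<open>q < L + e\<close> diff_quot_min_max[of F y x] by auto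
    qed (use d1 d2 in auto)
  qed
  then show ?thesis using has_field_derivative_iff by blast
qed

theorem negligible_not_differentiable_mono:
  fixes F :: "real \<Rightarrow> real"
  assumes F: "mono F" "continuous_on UNIV F"
  shows "negligible {x. \<not> (\<exists>L. (F has_real_derivative L) (at x))}"
proof -
  let ?Q = "{(p,q). p \<in> \<rat> \<and> q \<in> \<rat> \<and> (p::real) < q}"
  let ?E = "\<lambda>(p,q). {x. lower_derivate_lt F x p \<and> upper_derivate_gt F x q}"
  have "countable ?Q"
    by (rule countable_subset[of _ "\<rat> \<times> \<rat>"]) (auto simp: countable_rat)
  then have "negligible (\<Union>(?E ` ?Q))"
    by (intro negligible_countable_Union) (auto intro: negligible_lower_upper_derivate[OF F])
  then have "negligible (\<Union>(?E ` ?Q) \<union> {x. \<forall>M. upper_derivate_gt F x M})"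
    using negligible_upper_derivate_infinite[OF F] by (rule negligible_Un)
  moreover have "{x. \<not> (\<exists>L. (F has_real_derivative L) (at x))}
      \<subseteq> \<Union>(?E ` ?Q) \<union> {x. \<forall>M. upper_derivate_gt F x M}"
    using has_real_derivative_of_derivates[OF F(1)] by blast
  ultimately show ?thesis by (rule negligible_subset)
qed

section \<open>Absolutely continuous functions are differentiable almost everywhere\<close>

definition nonoverlapping_in :: "real \<Rightarrow> real \<Rightarrow> nat \<Rightarrow> (nat \<Rightarrow> real) \<Rightarrow> (nat \<Rightarrow> real) \<Rightarrow> bool" where
  "nonoverlapping_in a x n \<alpha> \<beta> \<longleftrightarrow> (\<forall>i<n. a \<le> \<alpha> i \<and> \<alpha> i \<le> \<beta> i \<and> \<beta> i \<le> x) \<and>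
      (\<forall>i<n. \<forall>j<n. i \<noteq> j \<longrightarrow> \<beta> i \<le> \<alpha> j \<or> \<beta> j \<le> \<alpha> i)"

definition variation_sums :: "(real \<Rightarrow> real) \<Rightarrow> real \<Rightarrow> real \<Rightarrow> real set" where
  "variation_sums f a x =
     {(\<Sum>i<n. \<bar>f (\<beta> i) - f (\<alpha> i)\<bar>) | n \<alpha> \<beta>. nonoverlapping_in a x n \<alpha> \<beta>}"

definition variation :: "(real \<Rightarrow> real) \<Rightarrow> real \<Rightarrow> real \<Rightarrow> real" where
  "variation f a x = Sup (variation_sums f a x)"

lemma nonoverlapping_in_length_le:
  assumes F: "nonoverlapping_in a x n \<alpha> \<beta>" and "a \<le> x"
  shows "(\<Sum>i<n. \<beta> i - \<alpha> i) \<le> x - a"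
proof -
  have bnd: "a \<le> \<alpha> i" "\<alpha> i \<le> \<beta> i" "\<beta> i \<le> x" if "i < n" for i
    using F that unfolding nonoverlapping_in_def by auto
  have disj: "disjoint_family_on (\<lambda>i. {\<alpha> i<..\<beta> i}) {..<n}"
    using F unfolding nonoverlapping_in_def disjoint_family_on_def
    by (auto simp: disjoint_iff) (meson le_less_trans less_le_not_le)+
  have "ennreal (\<Sum>i<n. \<beta> i - \<alpha> i) = (\<Sum>i<n. ennreal (\<beta> i - \<alpha> i))"
    using bnd(2) by (subst sum_ennreal) auto
  also have "\<dots> = (\<Sum>i<n. emeasure lborel {\<alpha> i<..\<beta> i})"
    using bnd(2) by (intro sum.cong) auto
  also have "\<dots> = emeasure lborel (\<Union>i<n. {\<alpha> i<..\<beta> i})"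
    by (rule sum_emeasure) (use disj in auto)
  also have "\<dots> \<le> emeasure lborel {a<..x}"
    using bnd by (intro emeasure_mono) fastforce+
  also have "\<dots> = ennreal (x - a)" using \<open>a \<le> x\<close> by simp
  finally show ?thesis using \<open>a \<le> x\<close> by (subst (asm) ennreal_le_iff) auto
qed

lemma nonoverlapping_in_mono: "nonoverlapping_in a x n \<alpha> \<beta> \<Longrightarrow> x \<le> y \<Longrightarrow> nonoverlapping_in a y n \<alpha> \<beta>"
  unfolding nonoverlapping_in_def by force

lemma variation_sums_mono: "x \<le> y \<Longrightarrow> variation_sums f a x \<subseteq> variation_sums f a y"
  unfolding variation_sums_def using nonoverlapping_in_mono by blast

lemma zero_in_variation_sums: "0 \<in> variation_sums f a x"
  unfolding variation_sums_def nonoverlapping_in_def by (rule CollectI, rule exI[of _ 0]) auto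

lemma abs_diff_le_split_at:
  fixes f :: "real \<Rightarrow> real"
  assumes "u \<le> v"
  shows "\<bar>f v - f u\<bar> \<le> \<bar>f (min v x) - f (min u x)\<bar> + \<bar>f (max v x) - f (max u x)\<bar>"
  using assms by (cases "v \<le> x"; cases "x \<le> u") (auto simp: min_def max_def)

lemma nonoverlapping_in_min:
  assumes "nonoverlapping_in a y n \<alpha> \<beta>" "a \<le> x"
  shows "nonoverlapping_in a x n (\<lambda>i. min (\<alpha> i) x) (\<lambda>i. min (\<beta> i) x)"
  unfolding nonoverlapping_in_def
proof (intro conjI allI impI)
  fix i j assume "i < n" "j < n" "i \<noteq> j"
  then show "min (\<beta> i) x \<le> min (\<alpha> j) x \<or> min (\<beta> j) x \<le> min (\<alpha> i) x"
    using assms(1) unfolding nonoverlapping_in_def by (metis min.mono order.refl)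
qed (use assms in \<open>auto simp: nonoverlapping_in_def\<close>)
lemma nonoverlapping_in_max:
  assumes "nonoverlapping_in a y n \<alpha> \<beta>" "x \<le> y"
  shows "nonoverlapping_in x y n (\<lambda>i. max (\<alpha> i) x) (\<lambda>i. max (\<beta> i) x)"
  unfolding nonoverlapping_in_def
proof (intro conjI allI impI)
  fix i j assume "i < n" "j < n" "i \<noteq> j"
  then show "max (\<beta> i) x \<le> max (\<alpha> j) x \<or> max (\<beta> j) x \<le> max (\<alpha> i) x"
    using assms(1) unfolding nonoverlapping_in_def by (metis max.mono order.refl)
qed (use assms in \<open>auto simp: nonoverlapping_in_def\<close>)
lemma absolutely_continuous_onD:
  fixes f :: "real \<Rightarrow> real"
  assumes "absolutely_continuous_on S f" "e > 0"
  obtains d where "d > 0" "\<And>(n::nat) \<alpha> \<beta>. (\<forall>i<n. \<alpha> i \<le> \<beta> i \<and> {\<alpha> i..\<beta> i} \<subseteq> S) \<Longrightarrow>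
        (\<forall>i<n. \<forall>j<n. i \<noteq> j \<longrightarrow> \<beta> i \<le> \<alpha> j \<or> \<beta> j \<le> \<alpha> i) \<Longrightarrow>
        (\<Sum>i<n. \<beta> i - \<alpha> i) < d \<Longrightarrow> (\<Sum>i<n. \<bar>f (\<beta> i) - f (\<alpha> i)\<bar>) < e"
proof -
  obtain d where "d > 0" and "\<forall>(n::nat) \<alpha> \<beta>. (\<forall>i<n. \<alpha> i \<le> \<beta> i \<and> {\<alpha> i..\<beta> i} \<subseteq> S) \<and>
        (\<forall>i<n. \<forall>j<n. i \<noteq> j \<longrightarrow> \<beta> i \<le> \<alpha> j \<or> \<beta> j \<le> \<alpha> i) \<and>
        (\<Sum>i<n. \<beta> i - \<alpha> i) < d \<longrightarrow> (\<Sum>i<n. \<bar>f (\<beta> i) - f (\<alpha> i)\<bar>) < e"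
    using assms unfolding absolutely_continuous_on_def real_norm_def by blast
  then show thesis using that by blast
qed

lemma variation_sums_short_extension:
  fixes f :: "real \<Rightarrow> real"
  assumes AC: "absolutely_continuous_on {a..b} f" and "e > 0"
  obtains d where "d > 0" "\<And>x y s. a \<le> x \<Longrightarrow> x \<le> y \<Longrightarrow> y \<le> b \<Longrightarrow> y - x < d \<Longrightarrow>
      s \<in> variation_sums f a y \<Longrightarrow> \<exists>s'\<in>variation_sums f a x. s \<le> s' + e"
proof -
  obtain d where d: "d > 0" "\<And>(n::nat) \<alpha> \<beta>. (\<forall>i<n. \<alpha> i \<le> \<beta> i \<and> {\<alpha> i..\<beta> i} \<subseteq> {a..b}) \<Longrightarrow>
        (\<forall>i<n. \<forall>j<n. i \<noteq> j \<longrightarrow> \<beta> i \<le> \<alpha> j \<or> \<beta> j \<le> \<alpha> i) \<Longrightarrow>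
        (\<Sum>i<n. \<beta> i - \<alpha> i) < d \<Longrightarrow> (\<Sum>i<n. \<bar>f (\<beta> i) - f (\<alpha> i)\<bar>) < e"
    using absolutely_continuous_onD[OF AC \<open>e > 0\<close>] by blast
  show thesis
  proof (rule that[OF d(1)])
    fix x y s assume xy: "a \<le> x" "x \<le> y" "y \<le> b" "y - x < d" and "s \<in> variation_sums f a y"
    then obtain n \<alpha> \<beta> where F: "nonoverlapping_in a y n \<alpha> \<beta>"
      and s: "s = (\<Sum>i<n. \<bar>f (\<beta> i) - f (\<alpha> i)\<bar>)"
      unfolding variation_sums_def by (auto simp only: mem_Collect_eq)
    \<comment> \<open>cut every interval at x; the parts to the right of x have total length at most y - x\<close>
    define \<alpha>1 where "\<alpha>1 = (\<lambda>i. min (\<alpha> i) x)"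
    define \<beta>1 where "\<beta>1 = (\<lambda>i. min (\<beta> i) x)"
    define \<alpha>2 where "\<alpha>2 = (\<lambda>i. max (\<alpha> i) x)"
    define \<beta>2 where "\<beta>2 = (\<lambda>i. max (\<beta> i) x)"
    have F1: "nonoverlapping_in a x n \<alpha>1 \<beta>1"
      unfolding \<alpha>1_def \<beta>1_def by (rule nonoverlapping_in_min[OF F xy(1)])
    have F2: "nonoverlapping_in x y n \<alpha>2 \<beta>2"
      unfolding \<alpha>2_def \<beta>2_def by (rule nonoverlapping_in_max[OF F xy(2)])
    have "(\<Sum>i<n. \<beta>2 i - \<alpha>2 i) < d"
      using nonoverlapping_in_length_le[OF F2 xy(2)] xy(4) by linarith
    then have small: "(\<Sum>i<n. \<bar>f (\<beta>2 i) - f (\<alpha>2 i)\<bar>) < e"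
      using F2 xy(1,3) unfolding nonoverlapping_in_def by (intro d(2)) auto
    have "s \<le> (\<Sum>i<n. \<bar>f (\<beta>1 i) - f (\<alpha>1 i)\<bar> + \<bar>f (\<beta>2 i) - f (\<alpha>2 i)\<bar>)"
      unfolding s \<alpha>1_def \<beta>1_def \<alpha>2_def \<beta>2_def
      using F by (intro sum_mono abs_diff_le_split_at) (auto simp: nonoverlapping_in_def)
    also have "\<dots> \<le> (\<Sum>i<n. \<bar>f (\<beta>1 i) - f (\<alpha>1 i)\<bar>) + e"
      using small by (simp add: sum.distrib)
    finally show "\<exists>s'\<in>variation_sums f a x. s \<le> s' + e"
      using F1 unfolding variation_sums_def by (intro bexI[of _ "\<Sum>i<n. \<bar>f (\<beta>1 i) - f (\<alpha>1 i)\<bar>"]) (simp, blast)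
  qed
qed

lemma nonoverlapping_in_snoc:
  assumes "nonoverlapping_in a x n \<alpha> \<beta>" "a \<le> x" "x \<le> y"
  shows "nonoverlapping_in a y (Suc n) (\<alpha>(n := x)) (\<beta>(n := y))"
  using assms unfolding nonoverlapping_in_def
  by (auto simp: less_Suc_eq)

lemma bdd_above_variation_sums:
  fixes f :: "real \<Rightarrow> real"
  assumes AC: "absolutely_continuous_on {a..b} f" and "a \<le> x" "x \<le> b"
  shows "bdd_above (variation_sums f a x)"
proof -
  obtain d where d: "d > 0" "\<And>x y s. a \<le> x \<Longrightarrow> x \<le> y \<Longrightarrow> y \<le> b \<Longrightarrow> y - x < d \<Longrightarrow>
      s \<in> variation_sums f a y \<Longrightarrow> \<exists>s'\<in>variation_sums f a x. s \<le> s' + 1"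
    using variation_sums_short_extension[OF AC, of 1] by auto
  have "a \<le> b" using assms by linarith
  \<comment> \<open>each step of length d/2 adds at most 1 to the variation sums\<close>
  have steps: "\<forall>s\<in>variation_sums f a (min b (a + real k * d / 2)). s \<le> real k" for k
  proof (induction k)
    case 0
    have "s = 0" if s: "s \<in> variation_sums f a a" for s
    proof -
      obtain n \<alpha> \<beta> where F: "nonoverlapping_in a a n \<alpha> \<beta>"
        and "s = (\<Sum>i<n. \<bar>f (\<beta> i) - f (\<alpha> i)\<bar>)"
        using s unfolding variation_sums_def by blast
      moreover have "\<beta> i = \<alpha> i" if "i < n" for i
        using F \<open>i < n\<close> unfolding nonoverlapping_in_def by (meson order_antisym order_trans)
      ultimately show ?thesis by simp
    qed
    then show ?case using \<open>a \<le> b\<close> by auto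
  next
    case (Suc k)
    show ?case
    proof
      fix s assume s: "s \<in> variation_sums f a (min b (a + real (Suc k) * d / 2))"
      have "\<exists>s'\<in>variation_sums f a (min b (a + real k * d / 2)). s \<le> s' + 1"
        by (rule d(2)[OF _ _ _ _ s]) (use \<open>a \<le> b\<close> d(1) in \<open>auto simp: field_simps min_def\<close>)
      then show "s \<le> real (Suc k)" using Suc.IH by force
    qed
  qed
  obtain k :: nat where "(b - a) / (d / 2) \<le> real k" using real_arch_simple by blast
  then have "min b (a + real k * d / 2) = b" using d(1) by (simp add: field_simps)
  then have "bdd_above (variation_sums f a b)" using steps[of k] by (auto simp: bdd_above_def)
  then show ?thesis by (rule bdd_above_mono) (rule variation_sums_mono[OF \<open>x \<le> b\<close>])
qed

lemma variation_add_increment: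
  fixes f :: "real \<Rightarrow> real"
  assumes AC: "absolutely_continuous_on {a..b} f" and xy: "a \<le> x" "x \<le> y" "y \<le> b"
  shows "variation f a x + \<bar>f y - f x\<bar> \<le> variation f a y"
proof -
  have bdd: "bdd_above (variation_sums f a y)"
    using bdd_above_variation_sums[OF AC] xy by simp
  have "variation f a x \<le> variation f a y - \<bar>f y - f x\<bar>"
    unfolding variation_def
  proof (rule cSup_least)
    show "variation_sums f a x \<noteq> {}" using zero_in_variation_sums by blast
    fix s assume "s \<in> variation_sums f a x"
    then obtain n \<alpha> \<beta> where F: "nonoverlapping_in a x n \<alpha> \<beta>"
      and s: "s = (\<Sum>i<n. \<bar>f (\<beta> i) - f (\<alpha> i)\<bar>)"
      unfolding variation_sums_def by (auto simp only: mem_Collect_eq)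
    have "(\<Sum>i<n. \<bar>(f \<circ> \<beta>(n := y)) i - (f \<circ> \<alpha>(n := x)) i\<bar>) = s"
      unfolding s by (intro sum.cong) auto
    then have "s + \<bar>f y - f x\<bar> = (\<Sum>i<Suc n. \<bar>(f \<circ> \<beta>(n := y)) i - (f \<circ> \<alpha>(n := x)) i\<bar>)"
      by simp
    also have "\<dots> \<in> variation_sums f a y"
      using nonoverlapping_in_snoc[OF F xy(1,2)] unfolding variation_sums_def comp_def by blast
    finally have "s + \<bar>f y - f x\<bar> \<le> Sup (variation_sums f a y)" by (rule cSup_upper[OF _ bdd])
    then show "s \<le> Sup (variation_sums f a y) - \<bar>f y - f x\<bar>" by linarith
  qed
  then show ?thesis by linarith
qed

lemma variation_short_increment:
  fixes f :: "real \<Rightarrow> real"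
  assumes AC: "absolutely_continuous_on {a..b} f" and "e > 0"
  obtains d where "d > 0"
    "\<And>x y. a \<le> x \<Longrightarrow> x \<le> y \<Longrightarrow> y \<le> b \<Longrightarrow> y - x < d \<Longrightarrow> variation f a y \<le> variation f a x + e"
proof -
  obtain d where d: "d > 0" "\<And>x y s. a \<le> x \<Longrightarrow> x \<le> y \<Longrightarrow> y \<le> b \<Longrightarrow> y - x < d \<Longrightarrow>
      s \<in> variation_sums f a y \<Longrightarrow> \<exists>s'\<in>variation_sums f a x. s \<le> s' + e"
    using variation_sums_short_extension[OF AC \<open>e > 0\<close>] by blast
  show thesis
  proof (rule that[OF d(1)])
    fix x y assume xy: "a \<le> x" "x \<le> y" "y \<le> b" "y - x < d"
    have bdd: "bdd_above (variation_sums f a x)"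
      using bdd_above_variation_sums[OF AC] xy by simp
    show "variation f a y \<le> variation f a x + e"
      unfolding variation_def
    proof (rule cSup_least)
      show "variation_sums f a y \<noteq> {}" using zero_in_variation_sums by blast
      fix s assume "s \<in> variation_sums f a y"
      then obtain s' where "s' \<in> variation_sums f a x" "s \<le> s' + e" using d(2)[OF xy] by blast
      then show "s \<le> Sup (variation_sums f a x) + e" using cSup_upper[OF _ bdd, of s'] by linarith
    qed
  qed
qed

lemma continuous_on_variation:
  fixes f :: "real \<Rightarrow> real"
  assumes AC: "absolutely_continuous_on {a..b} f"
  shows "continuous_on {a..b} (variation f a)"
  unfolding continuous_on_iff
proof (intro ballI allI impI)
  fix x0 e :: real assume x0: "x0 \<in> {a..b}" and "e > 0"
  then obtain d where d: "d > 0"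
    "\<And>x y. a \<le> x \<Longrightarrow> x \<le> y \<Longrightarrow> y \<le> b \<Longrightarrow> y - x < d \<Longrightarrow> variation f a y \<le> variation f a x + e/2"
    using variation_short_increment[OF AC, of "e/2"] by auto
  have mono: "variation f a x \<le> variation f a y" if "a \<le> x" "x \<le> y" "y \<le> b" for x y
    using variation_add_increment[OF AC that] by linarith
  show "\<exists>d>0. \<forall>x\<in>{a..b}. dist x x0 < d \<longrightarrow> dist (variation f a x) (variation f a x0) < e"
  proof (intro exI[of _ d] conjI ballI impI)
    fix x assume x: "x \<in> {a..b}" "dist x x0 < d"
    show "dist (variation f a x) (variation f a x0) < e"
      using x x0 \<open>e > 0\<close> d(2)[of x0 x] d(2)[of x x0] mono[of x0 x] mono[of x x0]
      by (cases "x0 \<le> x") (auto simp: dist_real_def)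
  qed (use d in auto)
qed

lemma absolutely_continuous_on_imp_continuous_on:
  fixes f :: "real \<Rightarrow> real"
  assumes AC: "absolutely_continuous_on {a..b} f"
  shows "continuous_on {a..b} f"
  unfolding continuous_on_iff
proof (intro ballI allI impI)
  fix x0 e :: real assume x0: "x0 \<in> {a..b}" and e: "e > 0"
  obtain d where d: "d > 0" "\<And>(n::nat) \<alpha> \<beta>. (\<forall>i<n. \<alpha> i \<le> \<beta> i \<and> {\<alpha> i..\<beta> i} \<subseteq> {a..b}) \<Longrightarrow>
        (\<forall>i<n. \<forall>j<n. i \<noteq> j \<longrightarrow> \<beta> i \<le> \<alpha> j \<or> \<beta> j \<le> \<alpha> i) \<Longrightarrow>
        (\<Sum>i<n. \<beta> i - \<alpha> i) < d \<Longrightarrow> (\<Sum>i<n. \<bar>f (\<beta> i) - f (\<alpha> i)\<bar>) < e"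
    using absolutely_continuous_onD[OF AC e] by blast
  show "\<exists>d>0. \<forall>x\<in>{a..b}. dist x x0 < d \<longrightarrow> dist (f x) (f x0) < e"
  proof (intro exI[of _ d] conjI ballI impI)
    fix x assume x: "x \<in> {a..b}" "dist x x0 < d"
    have "\<bar>f (max x x0) - f (min x x0)\<bar> < e"
      using d(2)[of 1 "\<lambda>_. min x x0" "\<lambda>_. max x x0"] x x0
      by (auto simp: dist_real_def min_def max_def)
    then show "dist (f x) (f x0) < e"
      by (cases "x0 \<le> x") (auto simp: dist_real_def abs_minus_commute)
  qed (use d in auto)
qed

lemma negligible_not_differentiable_mono_on:
  fixes g :: "real \<Rightarrow> real"
  assumes "mono_on {a..b} g" "continuous_on {a..b} g"
  shows "negligible {t \<in> {a..b}. \<not> (\<exists>D. (g has_real_derivative D) (at t within {a..b}))}"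
proof (cases "a \<le> b")
  case True
  define c where "c t = max a (min b t)" for t
  have c: "c t \<in> {a..b}" "t \<in> {a..b} \<Longrightarrow> c t = t" for t
    unfolding c_def using True by auto
  have "mono (g \<circ> c)"
    using assms(1) c(1) unfolding c_def by (intro monoI) (auto simp: mono_on_def)
  moreover have "continuous_on UNIV (g \<circ> c)"
    using c(1) unfolding c_def
    by (intro continuous_on_compose continuous_intros continuous_on_subset[OF assms(2)]) auto
  ultimately have "negligible {t. \<not> (\<exists>D. ((g \<circ> c) has_real_derivative D) (at t))}"
    by (rule negligible_not_differentiable_mono)
  then show ?thesis
  proof (rule negligible_subset, safe)
    fix t D assume t: "t \<in> {a..b}" and "((g \<circ> c) has_real_derivative D) (at t)"
    then have "((g \<circ> c) has_real_derivative D) (at t within {a..b})"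
      using has_field_derivative_at_within by blast
    then have "(g has_real_derivative D) (at t within {a..b})"
      by (rule has_field_derivative_transform_within[OF _ zero_less_one t]) (simp add: c(2))
    moreover assume "\<not> (\<exists>D. (g has_real_derivative D) (at t within {a..b}))"
    ultimately show False by blast
  qed
qed simp

theorem negligible_not_differentiable_absolutely_continuous:
  fixes f :: "real \<Rightarrow> real"
  assumes AC: "absolutely_continuous_on {a..b} f"
  shows "negligible {t \<in> {a..b}. \<not> (\<exists>D. (f has_real_derivative D) (at t within {a..b}))}"
proof -
  \<comment> \<open>Jordan decomposition: f = (g - h) / 2 with g and h increasing\<close>
  define g where "g t = variation f a t + f t" for t
  define h where "h t = variation f a t - f t" for t
  have "mono_on {a..b} g" "mono_on {a..b} h"
    using variation_add_increment[OF AC] unfolding g_def h_def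
    by (auto intro!: mono_onI) (smt (verit))+
  moreover have "continuous_on {a..b} g" "continuous_on {a..b} h"
    unfolding g_def h_def using continuous_on_variation[OF AC]
      absolutely_continuous_on_imp_continuous_on[OF AC] by (auto intro: continuous_intros)
  ultimately have "negligible ({t \<in> {a..b}. \<not> (\<exists>D. (g has_real_derivative D) (at t within {a..b}))} \<union>
      {t \<in> {a..b}. \<not> (\<exists>D. (h has_real_derivative D) (at t within {a..b}))})"
    by (intro negligible_Un negligible_not_differentiable_mono_on)
  then show ?thesis
  proof (rule negligible_subset, safe)
    fix t Dg Dh
    assume "(g has_real_derivative Dg) (at t within {a..b})" "(h has_real_derivative Dh) (at t within {a..b})"
    then have "((\<lambda>s. (g s - h s) / 2) has_real_derivative (Dg - Dh) / 2) (at t within {a..b})"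
      by (intro DERIV_cdivide DERIV_diff)
    moreover have "(\<lambda>s. (g s - h s) / 2) = f" unfolding g_def h_def by auto
    moreover assume "\<not> (\<exists>D. (f has_real_derivative D) (at t within {a..b}))"
    ultimately show False by auto
  qed
qed

lemma absolutely_continuous_on_compose_lipschitz:
  fixes \<gamma> :: "real \<Rightarrow> 'a::real_normed_vector" and g :: "'a \<Rightarrow> 'b::real_normed_vector"
  assumes AC: "absolutely_continuous_on S \<gamma>" and g: "L-lipschitz_on UNIV g"
  shows "absolutely_continuous_on S (\<lambda>t. g (\<gamma> t))"
  unfolding absolutely_continuous_on_def
proof (intro allI impI)
  fix e :: real assume "e > 0"
  have "L \<ge> 0" using g by (rule lipschitz_on_nonneg)
  then have "e / (L + 1) > 0" using \<open>e > 0\<close> by simp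
  then obtain d where "d > 0" and d: "\<forall>(n::nat) a b. (\<forall>i<n. a i \<le> b i \<and> {a i..b i} \<subseteq> S) \<and>
        (\<forall>i<n. \<forall>j<n. i \<noteq> j \<longrightarrow> b i \<le> a j \<or> b j \<le> a i) \<and>
        (\<Sum>i<n. b i - a i) < d \<longrightarrow> (\<Sum>i<n. norm (\<gamma> (b i) - \<gamma> (a i))) < e / (L + 1)"
    using AC unfolding absolutely_continuous_on_def by blast
  show "\<exists>d>0. \<forall>(n::nat) a b. (\<forall>i<n. a i \<le> b i \<and> {a i..b i} \<subseteq> S) \<and>
        (\<forall>i<n. \<forall>j<n. i \<noteq> j \<longrightarrow> b i \<le> a j \<or> b j \<le> a i) \<and>
        (\<Sum>i<n. b i - a i) < d \<longrightarrow> (\<Sum>i<n. norm (g (\<gamma> (b i)) - g (\<gamma> (a i)))) < e"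
  proof (intro exI[of _ d] conjI allI impI)
    fix n :: nat and a b :: "nat \<Rightarrow> real"
    assume P: "(\<forall>i<n. a i \<le> b i \<and> {a i..b i} \<subseteq> S) \<and>
        (\<forall>i<n. \<forall>j<n. i \<noteq> j \<longrightarrow> b i \<le> a j \<or> b j \<le> a i) \<and> (\<Sum>i<n. b i - a i) < d"
    have "(\<Sum>i<n. norm (g (\<gamma> (b i)) - g (\<gamma> (a i)))) \<le> L * (\<Sum>i<n. norm (\<gamma> (b i) - \<gamma> (a i)))"
      unfolding sum_distrib_left by (intro sum_mono lipschitz_on_normD[OF g]) auto
    also have "\<dots> \<le> L * (e / (L + 1))"
      using d P \<open>L \<ge> 0\<close> by (meson less_imp_le mult_left_mono)
    also have "\<dots> < e" using \<open>L \<ge> 0\<close> \<open>e > 0\<close> by (simp add: field_simps)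
    finally show "(\<Sum>i<n. norm (g (\<gamma> (b i)) - g (\<gamma> (a i)))) < e" .
  qed (use \<open>d > 0\<close> in auto)
qed

lemma lipschitz_on_inner_Basis: "u \<in> Basis \<Longrightarrow> 1-lipschitz_on UNIV (\<lambda>x::'a::euclidean_space. x \<bullet> u)"
  by (intro lipschitz_onI) (auto simp: dist_norm inner_diff_left[symmetric] Basis_le_norm)

theorem negligible_not_vector_differentiable_absolutely_continuous:
  fixes \<gamma> :: "real \<Rightarrow> 'a::euclidean_space"
  assumes AC: "absolutely_continuous_on {a..b} \<gamma>"
  shows "negligible {t \<in> {a..b}. \<not> (\<exists>v. (\<gamma> has_vector_derivative v) (at t within {a..b}))}"
proof -
  let ?N = "\<lambda>u. {t \<in> {a..b}. \<not> (\<exists>D. ((\<lambda>t. \<gamma> t \<bullet> u) has_real_derivative D) (at t within {a..b}))}"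
  have "negligible (?N u)" if "u \<in> Basis" for u
    by (rule negligible_not_differentiable_absolutely_continuous
        [OF absolutely_continuous_on_compose_lipschitz[OF AC lipschitz_on_inner_Basis[OF that]]])
  then have N: "negligible (\<Union>u\<in>Basis. ?N u)" by (intro negligible_Union) auto
  show ?thesis
  proof (rule negligible_subset[OF N], rule subsetI)
    fix t assume t: "t \<in> {t \<in> {a..b}. \<not> (\<exists>v. (\<gamma> has_vector_derivative v) (at t within {a..b}))}"
    show "t \<in> (\<Union>u\<in>Basis. ?N u)"
    proof (rule ccontr)
      assume "t \<notin> (\<Union>u\<in>Basis. ?N u)"
      then have "\<forall>u\<in>Basis. \<exists>D. ((\<lambda>t. \<gamma> t \<bullet> u) has_real_derivative D) (at t within {a..b})"
        using t by blast
      then obtain D where D: "\<And>u. u \<in> Basis \<Longrightarrow> ((\<lambda>t. \<gamma> t \<bullet> u) has_real_derivative D u) (at t within {a..b})"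
        by metis
      define v where "v = (\<Sum>u\<in>Basis. D u *\<^sub>R u)"
      have v: "v \<bullet> u = D u" if "u \<in> Basis" for u
        unfolding v_def using that by (simp add: inner_sum_left inner_Basis if_distrib cong: if_cong)
      have "(\<gamma> has_derivative (\<lambda>h. h *\<^sub>R v)) (at t within {a..b})"
      proof (rule has_derivative_componentwise_within[THEN iffD2], rule ballI)
        fix u :: 'a assume u: "u \<in> Basis"
        have "((\<lambda>t. \<gamma> t \<bullet> u) has_derivative (*) (D u)) (at t within {a..b})"
          using D[OF u] by (simp add: has_field_derivative_def)
        moreover have "(\<lambda>h. (h *\<^sub>R v) \<bullet> u) = (*) (D u)" using v[OF u] by (auto simp: mult.commute)
        ultimately show "((\<lambda>x. \<gamma> x \<bullet> u) has_derivative (\<lambda>h. (h *\<^sub>R v) \<bullet> u)) (at t within {a..b})"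
          by simp
      qed
      then show False using t by (auto simp: has_vector_derivative_def)
    qed
  qed
qed

section \<open>The distance to a set along a curve\<close>

lemma dist_set_eq_max_oriented_dist:
  assumes "open \<Omega>"
  shows "dist_set \<Omega> x = max (oriented_dist \<Omega> x) 0"
  using infdist_nonneg[of x \<Omega>] infdist_nonneg[of x "- \<Omega>"]
  by (cases "x \<in> \<Omega>") (simp_all add: dist_set_def oriented_dist_def)

lemma lipschitz_on_dist_set: "1-lipschitz_on UNIV (dist_set \<Omega>)"
  by (intro lipschitz_onI) (auto simp: dist_set_def dist_real_def infdist_triangle_abs)

lemma oriented_dist_frontier:
  assumes "open \<Omega>" "\<Omega> \<noteq> {}" "x \<in> frontier \<Omega>"
  shows "oriented_dist \<Omega> x = 0"
proof -
  have "infdist x \<Omega> = 0"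
    using assms(3) in_closure_iff_infdist_zero[OF assms(2)] by (simp add: frontier_def)
  moreover have "x \<notin> \<Omega>" using assms(1,3) by (simp add: frontier_def interior_open)
  ultimately show ?thesis unfolding oriented_dist_def by simp
qed

lemma oriented_dist_pos:
  assumes "\<Omega> \<noteq> {}" "x \<notin> closure \<Omega>"
  shows "oriented_dist \<Omega> x > 0"
proof -
  have "infdist x \<Omega> > 0"
    using in_closure_iff_infdist_zero[OF assms(1)] assms(2) infdist_nonneg[of x \<Omega>] by fastforce
  moreover have "x \<in> - \<Omega>" using assms(2) closure_subset by blast
  ultimately show ?thesis unfolding oriented_dist_def by simp
qed

lemma in_frontier_neighbourhood:
  fixes x :: "'a::euclidean_space"
  assumes "\<Omega> \<noteq> {}" "x \<notin> \<Omega>" "infdist x \<Omega> < r"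
  shows "x \<in> (\<Union>z\<in>frontier \<Omega>. ball z r)"
proof -
  obtain y where y: "y \<in> \<Omega>" "dist x y < r"
    using assms(1,3) by (auto simp: infdist_notempty cINF_less_iff intro: bdd_belowI[of _ 0])
  have "closed_segment x y \<inter> frontier \<Omega> \<noteq> {}"
    using y(1) assms(2) by (intro connected_Int_frontier) auto
  then obtain z where z: "z \<in> closed_segment x y" "z \<in> frontier \<Omega>" by blast
  then have "dist z x \<le> dist x y" using dist_in_closed_segment[OF z(1)] by simp
  then have "x \<in> ball z r" using y(2) by (simp add: dist_commute)
  then show ?thesis using z(2) by blast
qed

lemma has_real_derivative_gradient_comp:
  fixes \<gamma> :: "real \<Rightarrow> 'a::euclidean_space"
  assumes "(b has_derivative (\<lambda>h. Db \<bullet> h)) (at (\<gamma> t))"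
    and "(\<gamma> has_vector_derivative v) (at t within S)"
  shows "((\<lambda>s. b (\<gamma> s)) has_real_derivative (Db \<bullet> v)) (at t within S)"
proof -
  have "((\<lambda>s. b (\<gamma> s)) has_derivative (\<lambda>h. Db \<bullet> (h *\<^sub>R v))) (at t within S)"
    using has_derivative_compose[OF assms(2)[unfolded has_vector_derivative_def] assms(1)] .
  moreover have "(\<lambda>h. Db \<bullet> (h *\<^sub>R v)) = (*) (Db \<bullet> v)" by auto
  ultimately show ?thesis by (simp add: has_field_derivative_def)
qed

lemma has_real_derivative_max_zero_pos:
  fixes \<phi> :: "real \<Rightarrow> real"
  assumes d: "(\<phi> has_real_derivative c) (at t within S)" and "\<phi> t > 0" "t \<in> S"
  shows "((\<lambda>s. max (\<phi> s) 0) has_real_derivative c) (at t within S)"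
proof -
  have "(\<phi> \<longlongrightarrow> \<phi> t) (at t within S)" using DERIV_continuous[OF d] by (simp add: continuous_within)
  then have "eventually (\<lambda>s. \<phi> s > 0) (at t within S)" using \<open>\<phi> t > 0\<close> by (rule order_tendstoD(1))
  then obtain e where e: "e > 0" "\<And>s. s \<in> S \<Longrightarrow> s \<noteq> t \<Longrightarrow> dist s t < e \<Longrightarrow> \<phi> s > 0"
    unfolding eventually_at by blast
  show ?thesis
  proof (rule has_field_derivative_transform_within[OF d e(1) \<open>t \<in> S\<close>])
    fix s assume "s \<in> S" "dist s t < e"
    then show "\<phi> s = max (\<phi> s) 0" using e(2) \<open>\<phi> t > 0\<close> by (cases "s = t") auto
  qed
qed

lemma has_real_derivative_max_zero_root:
  fixes \<phi> :: "real \<Rightarrow> real"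
  assumes d: "(\<phi> has_real_derivative 0) (at t within S)" and "\<phi> t = 0"
  shows "((\<lambda>s. max (\<phi> s) 0) has_real_derivative 0) (at t within S)"
proof -
  have q: "((\<lambda>y. (\<phi> y - \<phi> t) / (y - t)) \<longlongrightarrow> 0) (at t within S)"
    using d by (simp add: has_field_derivative_iff)
  have "((\<lambda>y. (max (\<phi> y) 0 - max (\<phi> t) 0) / (y - t)) \<longlongrightarrow> 0) (at t within S)"
  proof (rule Lim_null_comparison[OF always_eventually tendsto_rabs_zero[OF q]], rule allI)
    fix y
    have "\<bar>max (\<phi> y) 0\<bar> / \<bar>y - t\<bar> \<le> \<bar>\<phi> y\<bar> / \<bar>y - t\<bar>" by (rule divide_right_mono) auto
    then show "norm ((max (\<phi> y) 0 - max (\<phi> t) 0) / (y - t)) \<le> \<bar>(\<phi> y - \<phi> t) / (y - t)\<bar>"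
      using \<open>\<phi> t = 0\<close> by (simp add: abs_divide)
  qed
  then show ?thesis by (simp add: has_field_derivative_iff)
qed

lemma has_real_derivative_dist_set_comp:
  fixes \<gamma> :: "real \<Rightarrow> 'a::euclidean_space"
  assumes "open \<Omega>" "\<Omega> \<noteq> {}"
    and grad: "\<And>z. z \<notin> \<Omega> \<Longrightarrow> dist_set \<Omega> z < \<rho> \<Longrightarrow>
      (oriented_dist \<Omega> has_derivative (\<lambda>h. Db z \<bullet> h)) (at z)"
    and "dist_set \<Omega> (\<gamma> t) < \<rho>"
    and \<gamma>: "(\<gamma> has_vector_derivative v) (at t within S)" "t \<in> S"
    and tangential: "\<gamma> t \<in> frontier \<Omega> \<Longrightarrow> Db (\<gamma> t) \<bullet> v = 0"
  shows "((\<lambda>s. dist_set \<Omega> (\<gamma> s)) has_real_derivative (Db (\<gamma> t) \<bullet> v) * indicator (- \<Omega>) (\<gamma> t))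
           (at t within S)"
proof (cases "\<gamma> t \<in> \<Omega>")
  case True
  have "(\<gamma> \<longlongrightarrow> \<gamma> t) (at t within S)"
    using has_vector_derivative_continuous[OF \<gamma>(1)] by (simp add: continuous_within)
  then have "eventually (\<lambda>s. \<gamma> s \<in> \<Omega>) (at t within S)"
    using \<open>open \<Omega>\<close> True by (rule topological_tendstoD)
  then obtain e where e: "e > 0" "\<And>s. s \<in> S \<Longrightarrow> s \<noteq> t \<Longrightarrow> dist s t < e \<Longrightarrow> \<gamma> s \<in> \<Omega>"
    unfolding eventually_at by blast
  have "((\<lambda>s. dist_set \<Omega> (\<gamma> s)) has_real_derivative 0) (at t within S)"
  proof (rule has_field_derivative_transform_within[OF DERIV_const e(1) \<gamma>(2)])
    fix s assume "s \<in> S" "dist s t < e"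
    then have "\<gamma> s \<in> \<Omega>" using e(2) True by (cases "s = t") auto
    then show "0 = dist_set \<Omega> (\<gamma> s)" by (simp add: dist_set_def)
  qed
  then show ?thesis using True by simp
next
  case False
  have b: "((\<lambda>s. oriented_dist \<Omega> (\<gamma> s)) has_real_derivative Db (\<gamma> t) \<bullet> v) (at t within S)"
    using has_real_derivative_gradient_comp[OF grad[OF False \<open>dist_set \<Omega> (\<gamma> t) < \<rho>\<close>] \<gamma>(1)] .
  have "((\<lambda>s. max (oriented_dist \<Omega> (\<gamma> s)) 0) has_real_derivative Db (\<gamma> t) \<bullet> v)
      (at t within S)"
  proof (cases "\<gamma> t \<in> frontier \<Omega>")
    case True
    then show ?thesis
      using has_real_derivative_max_zero_root b tangential
        oriented_dist_frontier[OF \<open>open \<Omega>\<close> \<open>\<Omega> \<noteq> {}\<close> True] by simp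
  next
    case notin: False
    then have "\<gamma> t \<notin> closure \<Omega>" using False closure_Un_frontier by blast
    then show ?thesis
      using has_real_derivative_max_zero_pos[OF b _ \<gamma>(2)] oriented_dist_pos[OF \<open>\<Omega> \<noteq> {}\<close>]
      by blast
  qed
  then show ?thesis using False dist_set_eq_max_oriented_dist[OF \<open>open \<Omega>\<close>] by simp
qed

lemma discrete_imp_countable:
  fixes A :: "'a::euclidean_space set"
  assumes "discrete A"
  shows "countable A"
proof -
  let ?D = "- {x. x islimpt A}"
  have "open ?D" using closed_limpts by blast
  moreover have "A sparse_in ?D" using \<open>open ?D\<close> by (simp add: sparse_in_open)
  moreover have "A \<subseteq> ?D" using assms by (auto simp: discrete_def isolated_in_islimpt_iff)
  ultimately show ?thesis using sparse_imp_countable by (metis inf.absorb2)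
qed

lemma discrete_nondegenerate_zeros:
  fixes \<phi> :: "real \<Rightarrow> real"
  assumes "Z \<subseteq> S"
    and zero: "\<And>t. t \<in> Z \<Longrightarrow> \<phi> t = 0 \<and> (\<phi> has_real_derivative \<phi>' t) (at t within S) \<and> \<phi>' t \<noteq> 0"
  shows "discrete Z"
proof (rule discreteI)
  fix t assume "t \<in> Z"
  then have d: "(\<phi> has_real_derivative \<phi>' t) (at t within S)" "\<phi>' t \<noteq> 0" "\<phi> t = 0"
    using zero by auto
  have "((\<lambda>y. (\<phi> y - \<phi> t) / (y - t)) \<longlongrightarrow> \<phi>' t) (at t within S)"
    using d(1) by (simp add: has_field_derivative_iff)
  then have "eventually (\<lambda>y. (\<phi> y - \<phi> t) / (y - t) \<noteq> 0) (at t within S)"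
    using d(2) by (rule tendsto_imp_eventually_ne)
  then have "eventually (\<lambda>y. \<phi> y \<noteq> 0) (at t within S)"
    by (rule eventually_mono) (use d(3) in auto)
  then obtain e where "e > 0" "\<And>y. y \<in> S \<Longrightarrow> y \<noteq> t \<Longrightarrow> dist y t < e \<Longrightarrow> \<phi> y \<noteq> 0"
    unfolding eventually_at by blast
  then show "t isolated_in Z"
    unfolding isolated_in_dist_Ex_iff using \<open>t \<in> Z\<close> \<open>Z \<subseteq> S\<close> zero
    by (metis dist_commute subsetD)
qed

lemma discrete_transversal_frontier_times:
  fixes \<gamma> :: "real \<Rightarrow> 'a::euclidean_space"
  assumes "open \<Omega>" "\<Omega> \<noteq> {}"
    and grad: "\<And>z. z \<in> frontier \<Omega> \<Longrightarrow> (oriented_dist \<Omega> has_derivative (\<lambda>h. Db z \<bullet> h)) (at z)"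
  shows "discrete {t \<in> S. \<gamma> t \<in> frontier \<Omega> \<and> \<gamma> differentiable (at t within S) \<and>
                   Db (\<gamma> t) \<bullet> vector_derivative \<gamma> (at t within S) \<noteq> 0}"
proof (rule discrete_nondegenerate_zeros[where \<phi> = "\<lambda>s. oriented_dist \<Omega> (\<gamma> s)"])
  fix t assume "t \<in> {t \<in> S. \<gamma> t \<in> frontier \<Omega> \<and> \<gamma> differentiable (at t within S) \<and>
                   Db (\<gamma> t) \<bullet> vector_derivative \<gamma> (at t within S) \<noteq> 0}"
  then have t: "\<gamma> t \<in> frontier \<Omega>" "\<gamma> differentiable (at t within S)"
    "Db (\<gamma> t) \<bullet> vector_derivative \<gamma> (at t within S) \<noteq> 0" by auto
  show "oriented_dist \<Omega> (\<gamma> t) = 0 \<and>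
      ((\<lambda>s. oriented_dist \<Omega> (\<gamma> s)) has_real_derivative
        Db (\<gamma> t) \<bullet> vector_derivative \<gamma> (at t within S)) (at t within S) \<and>
      Db (\<gamma> t) \<bullet> vector_derivative \<gamma> (at t within S) \<noteq> 0"
    using oriented_dist_frontier[OF assms(1,2) t(1)] t(3)
      has_real_derivative_gradient_comp[OF grad[OF t(1)] t(2)[unfolded vector_derivative_works]]
    by blast
qed auto

lemma AE_has_real_derivative_dist_set_comp:
  fixes \<gamma> :: "real \<Rightarrow> 'a::euclidean_space"
  assumes "open \<Omega>" "\<Omega> \<noteq> {}" "\<rho> > 0"
    and grad: "\<And>z. z \<notin> \<Omega> \<Longrightarrow> dist_set \<Omega> z < \<rho> \<Longrightarrow>
      (oriented_dist \<Omega> has_derivative (\<lambda>h. Db z \<bullet> h)) (at z)"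
    and AC: "absolutely_continuous_on {a..b} \<gamma>"
    and close: "\<forall>t\<in>{a..b}. dist_set \<Omega> (\<gamma> t) < \<rho>"
  shows "AE t in lebesgue. t \<in> {a..b} \<longrightarrow>
    (\<exists>v. (\<gamma> has_vector_derivative v) (at t within {a..b}) \<and>
      ((\<lambda>s. dist_set \<Omega> (\<gamma> s)) has_real_derivative (Db (\<gamma> t) \<bullet> v) * indicator (- \<Omega>) (\<gamma> t))
        (at t within {a..b}))"
proof (rule AE_I')
  define N where "N = {t \<in> {a..b}. \<gamma> t \<in> frontier \<Omega> \<and> \<gamma> differentiable (at t within {a..b}) \<and>
    Db (\<gamma> t) \<bullet> vector_derivative \<gamma> (at t within {a..b}) \<noteq> 0}"
  define N' where "N' = {t \<in> {a..b}. \<not> (\<exists>v. (\<gamma> has_vector_derivative v) (at t within {a..b}))}"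
  have "z \<notin> \<Omega> \<and> dist_set \<Omega> z < \<rho>" if "z \<in> frontier \<Omega>" for z
    using that \<open>\<rho> > 0\<close> oriented_dist_frontier[OF assms(1,2) that]
      dist_set_eq_max_oriented_dist[OF assms(1)]
    by (auto simp: frontier_def interior_open[OF assms(1)])
  then have "discrete N" unfolding N_def
    by (intro discrete_transversal_frontier_times[OF assms(1,2)] grad) auto
  then have "negligible N" by (intro countable_imp_negligible discrete_imp_countable)
  then have "negligible (N' \<union> N \<union> {a})"
    unfolding N'_def using negligible_not_vector_differentiable_absolutely_continuous[OF AC]
    by (intro negligible_Un) auto
  then show "N' \<union> N \<union> {a} \<in> null_sets lebesgue" by (simp add: negligible_iff_null_sets)
  \<comment> \<open>a is discarded so that t > a, which makes the vector derivative within {a..b} unique\<close>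
  show "{t \<in> space lebesgue. \<not> (t \<in> {a..b} \<longrightarrow>
    (\<exists>v. (\<gamma> has_vector_derivative v) (at t within {a..b}) \<and>
      ((\<lambda>s. dist_set \<Omega> (\<gamma> s)) has_real_derivative (Db (\<gamma> t) \<bullet> v) * indicator (- \<Omega>) (\<gamma> t))
        (at t within {a..b})))} \<subseteq> N' \<union> N \<union> {a}"
  proof (safe, rule ccontr)
    fix t assume t: "t \<in> {a..b}" "t \<notin> N" "t \<notin> N'" "t \<noteq> a"
    then obtain v where v: "(\<gamma> has_vector_derivative v) (at t within {a..b})"
      unfolding N'_def by blast
    have "vector_derivative \<gamma> (at t within {a..b}) = v"
      using vector_derivative_within_cbox[of a b t \<gamma> v] t v by auto
    then have "\<gamma> t \<in> frontier \<Omega> \<Longrightarrow> Db (\<gamma> t) \<bullet> v = 0"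
      using t v unfolding N_def by (auto simp: differentiable_def has_vector_derivative_def)
    then have "((\<lambda>s. dist_set \<Omega> (\<gamma> s)) has_real_derivative (Db (\<gamma> t) \<bullet> v) * indicator (- \<Omega>) (\<gamma> t))
        (at t within {a..b})"
      using close t(1) by (intro has_real_derivative_dist_set_comp[OF assms(1,2) grad _ v]) auto
    moreover assume "\<not> (\<exists>v. (\<gamma> has_vector_derivative v) (at t within {a..b}) \<and>
      ((\<lambda>s. dist_set \<Omega> (\<gamma> s)) has_real_derivative (Db (\<gamma> t) \<bullet> v) * indicator (- \<Omega>) (\<gamma> t))
        (at t within {a..b}))"
    ultimately show False using v by blast
  qed
qed

theorem lemma3p1:
  fixes \<Omega> :: "'a::euclidean_space set"
    and \<rho>0 T :: real
    and \<gamma> :: "real \<Rightarrow> 'a"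
    and Db :: "'a \<Rightarrow> 'a"
    and D2b :: "'a \<Rightarrow> 'a \<Rightarrow>\<^sub>L 'a"
  assumes "open \<Omega>" and "bounded \<Omega>" and "\<Omega> \<noteq> {}"
    and "C2_boundary \<Omega>"
    and "\<rho>0 > 0"
    and "C2_on_with (\<Union>x\<in>frontier \<Omega>. ball x \<rho>0) (oriented_dist \<Omega>) Db D2b"
    and "bounded (Db ` (\<Union>x\<in>frontier \<Omega>. ball x \<rho>0))"
    and "bounded (D2b ` (\<Union>x\<in>frontier \<Omega>. ball x \<rho>0))"
    and "absolutely_continuous_on {0..T} \<gamma>"
    and "\<forall>t\<in>{0..T}. dist_set \<Omega> (\<gamma> t) < \<rho>0"
  shows "absolutely_continuous_on {0..T} (\<lambda>t. dist_set \<Omega> (\<gamma> t))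
    \<and> (AE t in lebesgue. t \<in> {0..T} \<longrightarrow>
         (\<exists>v. (\<gamma> has_vector_derivative v) (at t within {0..T}) \<and>
              ((\<lambda>s. dist_set \<Omega> (\<gamma> s)) has_real_derivative
                 ((Db (\<gamma> t) \<bullet> v) * indicator (- \<Omega>) (\<gamma> t))) (at t within {0..T})))
    \<and> discrete {t \<in> {0..T}. \<gamma> t \<in> frontier \<Omega> \<and> \<gamma> differentiable (at t within {0..T}) \<and>
                 Db (\<gamma> t) \<bullet> vector_derivative \<gamma> (at t within {0..T}) \<noteq> 0}"
proof -
  have grad: "(oriented_dist \<Omega> has_derivative (\<lambda>h. Db z \<bullet> h)) (at z)"
    if "z \<in> (\<Union>x\<in>frontier \<Omega>. ball x \<rho>0)" for z
    using assms(6) that unfolding C2_on_with_def by blast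
  have "z \<in> (\<Union>x\<in>frontier \<Omega>. ball x \<rho>0)" if "z \<in> frontier \<Omega>" for z
    using that \<open>\<rho>0 > 0\<close> by force
  moreover have "z \<in> (\<Union>x\<in>frontier \<Omega>. ball x \<rho>0)" if "z \<notin> \<Omega>" "dist_set \<Omega> z < \<rho>0" for z
    using in_frontier_neighbourhood[OF \<open>\<Omega> \<noteq> {}\<close>] that unfolding dist_set_def by blast
  ultimately show ?thesis
    using absolutely_continuous_on_compose_lipschitz[OF assms(9) lipschitz_on_dist_set]
      AE_has_real_derivative_dist_set_comp[OF assms(1,3,5) grad assms(9,10)]
      discrete_transversal_frontier_times[OF assms(1,3) grad]
    by blast
qed

end
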